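(* Let $\xi$ be the Hopf vector field on the unit sphere $S^{n+1}$, $n=2m$. Let $X,Y$ be orthonormal tangent vectors at a point of $S^{n+1}$ and $X_\xi^\tau,Y_\xi^\tau$ their $\xi$-tangential lifts. Then the sectional curvature of $\xi(S^{n+1})$ along the 2-plane spanned by $X_\xi^\tau,Y_\xi^\tau$ is $$\tilde K(X_\xi^\tau,Y_\xi^\tau)=\frac{1-\frac34\big[\langle\xi,X\rangle^2+\langle\xi,Y\rangle^2\big]+\frac32\langle A_\xi X,Y\rangle^2}{2-\big[\langle\xi,X\rangle^2+\langle\xi,Y\rangle^2\big]}.$$
   Context: A Hopf vector field on $S^{2m+1}\subset\mathbb R^{2m+2}$ is $\xi(x)=Jx$ for an orthogonal complex structure $J$ on $\mathbb R^{2m+2}$. $\nabla$ is the Levi-Civita connection of the sphere and $A_\xi X=-\nabla_X\xi$. $T_1S^{n+1}$ carries the metric induced from the Sasaki metric $\langle\langle \tilde X,\tilde Y\rangle\rangle=\langle \pi_*\tilde X,\pi_*\tilde Y\rangle+\langle K\tilde X,K\tilde Y\rangle$ on $TS^{n+1}$, and $\xi(S^{n+1})$ is the image of $\xi$ with the induced metric. At points of $\xi(S^{n+1})$, $Z^t=Z^v-\langle Z,\xi\rangle\xi^v$ and $X_\xi^\tau=X^h-(A_\xi X)^t$, which is tangent to $\xi(S^{n+1})$. *)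

theory Defs
  imports "HOL-Analysis.Analysis"
begin

definition pd :: "'k::finite \<Rightarrow> (real^'k \<Rightarrow> 'c::real_normed_vector) \<Rightarrow> real^'k \<Rightarrow> 'c" where
  "pd i f u = frechet_derivative f (at u) (axis i 1)"

fun Ck_on :: "nat \<Rightarrow> (real^'k::finite) set \<Rightarrow> (real^'k \<Rightarrow> 'c::real_normed_vector) \<Rightarrow> bool" where
  "Ck_on 0 U f = continuous_on U f"
| "Ck_on (Suc k) U f = (f differentiable_on U \<and> (\<forall>i. Ck_on k U (pd i f)))"

definition smooth_on :: "(real^'k::finite) set \<Rightarrow> (real^'k \<Rightarrow> 'c::real_normed_vector) \<Rightarrow> bool" where
  "smooth_on U f \<longleftrightarrow> (\<forall>k. Ck_on k U f)"

definition complex_structure :: "real^'n^'n \<Rightarrow> bool" where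
  "complex_structure J \<longleftrightarrow> orthogonal_matrix J \<and> J ** J = - mat 1"

definition tproj :: "real^'n \<Rightarrow> real^'n \<Rightarrow> real^'n" where
  "tproj p w = w - (w \<bullet> p) *\<^sub>R p"

definition hopf :: "real^'n^'n \<Rightarrow> real^'n \<Rightarrow> real^'n" where
  "hopf J x = J *v x"

text \<open>Levi-Civita connection of the round sphere applied to the Hopf field:
  nabla_X xi at p is the tangential part of the ambient derivative D_X (J x) = J X.
  The shape operator A_xi X = - nabla_X xi.\<close>
definition A_hopf :: "real^'n^'n \<Rightarrow> real^'n \<Rightarrow> real^'n \<Rightarrow> real^'n" where
  "A_hopf J p X = - tproj p (J *v X)"

text \<open>A map u \<mapsto> (P u, V u) into TS^{n+1} (|P u| = 1, V u \<perp> P u).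
  For a tangent vector Z = d(P,V)(w) of TS^{n+1}: pi_* Z = dP(w) and the connection map
  K Z = covariant derivative of V along P, i.e. tproj (P u) (dV(w)).
  Sasaki metric: <<Z,W>> = <pi_* Z, pi_* W> + <K Z, K W>.\<close>
definition sasaki_pullback ::
  "(real^'k::finite \<Rightarrow> real^'n) \<Rightarrow> (real^'k \<Rightarrow> real^'n) \<Rightarrow> real^'k \<Rightarrow> real^'k \<Rightarrow> real^'k \<Rightarrow> real" where
  "sasaki_pullback P V u a b =
     frechet_derivative P (at u) a \<bullet> frechet_derivative P (at u) b
     + tproj (P u) (frechet_derivative V (at u) a) \<bullet> tproj (P u) (frechet_derivative V (at u) b)"

definition metric_matrix ::
  "(real^'k::finite \<Rightarrow> real^'n) \<Rightarrow> (real^'k \<Rightarrow> real^'n) \<Rightarrow> real^'k \<Rightarrow> real^'k^'k" where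
  "metric_matrix P V u = (\<chi> i j. sasaki_pullback P V u (axis i 1) (axis j 1))"

text \<open>Christoffel symbols Gamma^l_{ij} (argument order: l i j).\<close>
definition christoffel :: "(real^'k::finite \<Rightarrow> real^'k^'k) \<Rightarrow> real^'k \<Rightarrow> 'k \<Rightarrow> 'k \<Rightarrow> 'k \<Rightarrow> real" where
  "christoffel g u l i j = (1/2) * (\<Sum>s\<in>UNIV. matrix_inv (g u) $ l $ s *
      (pd i (\<lambda>v. g v $ j $ s) u + pd j (\<lambda>v. g v $ i $ s) u - pd s (\<lambda>v. g v $ i $ j) u))"

text \<open>R(d_i,d_j) d_k = sum_l riemann g u l i j k d_l, with
  R(X,Y)Z = nabla_X nabla_Y Z - nabla_Y nabla_X Z - nabla_[X,Y] Z.\<close>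
definition riemann :: "(real^'k::finite \<Rightarrow> real^'k^'k) \<Rightarrow> real^'k \<Rightarrow> 'k \<Rightarrow> 'k \<Rightarrow> 'k \<Rightarrow> 'k \<Rightarrow> real" where
  "riemann g u l i j k =
     pd i (\<lambda>v. christoffel g v l j k) u - pd j (\<lambda>v. christoffel g v l i k) u
     + (\<Sum>s\<in>UNIV. christoffel g u s j k * christoffel g u l i s
                  - christoffel g u s i k * christoffel g u l j s)"

definition gform :: "(real^'k::finite \<Rightarrow> real^'k^'k) \<Rightarrow> real^'k \<Rightarrow> real^'k \<Rightarrow> real^'k \<Rightarrow> real" where
  "gform g u a b = (\<Sum>i\<in>UNIV. \<Sum>j\<in>UNIV. a $ i * b $ j * g u $ i $ j)"

definition sectional_curvature :: "(real^'k::finite \<Rightarrow> real^'k^'k) \<Rightarrow> real^'k \<Rightarrow> real^'k \<Rightarrow> real^'k \<Rightarrow> real" where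
  "sectional_curvature g u a b =
     (\<Sum>i\<in>UNIV. \<Sum>j\<in>UNIV. \<Sum>k\<in>UNIV. \<Sum>l\<in>UNIV. \<Sum>m\<in>UNIV.
        a $ i * b $ j * b $ k * a $ m * riemann g u l i j k * g u $ l $ m)
     / (gform g u a a * gform g u b b - (gform g u a b)\<^sup>2)"

end

(*
  The map x |-> (x, (x x^T + (Jx)(Jx)^T) / 2) from R^(n+2) to R^(n+2) x R^((n+2) x (n+2)),
  restricted to the unit sphere, is an isometry for the metric that the Sasaki metric induces
  along the Hopf field: for X, Y tangent at p both metrics give 2 <X,Y> - <X,Jp> <Y,Jp>.  So the
  sectional curvature of xi(S^(n+1)) is that of the image of this quadratic embedding.  The Gauss
  equation in coordinates, valid for any smooth immersion of an open subset of R^k into an inner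
  product space, expresses it through the second fundamental form of the embedded sphere, which
  is explicit: the normal component of the second derivative of the embedding along great circles.
*)

theory Submission
  imports Defs
begin

section \<open>Partial derivatives and smooth maps\<close>

lemma has_derivative_imp_pd:
  assumes "(f has_derivative f') (at v)"
  shows "pd i f v = f' (axis i 1)"
  using assms frechet_derivative_at pd_def by metis

lemma has_derivative_sum_pd:
  fixes f :: "real^'k::finite \<Rightarrow> 'e::real_normed_vector"
  assumes "f differentiable (at v)"
  shows "(f has_derivative (\<lambda>h. \<Sum>l\<in>UNIV. h$l *\<^sub>R pd l f v)) (at v)"
proof -
  have lin: "linear (frechet_derivative f (at v))"
    using assms frechet_derivative_works has_derivative_linear by blast
  have "frechet_derivative f (at v) h = (\<Sum>l\<in>UNIV. h$l *\<^sub>R pd l f v)" for h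
  proof -
    have "frechet_derivative f (at v) h = frechet_derivative f (at v) (\<Sum>l\<in>UNIV. h$l *\<^sub>R axis l 1)"
      using basis_expansion[of h] by (simp add: scalar_mult_eq_scaleR)
    also have "\<dots> = (\<Sum>l\<in>UNIV. h$l *\<^sub>R pd l f v)"
      using lin by (simp add: linear_sum linear_scale pd_def)
    finally show ?thesis .
  qed
  then have "frechet_derivative f (at v) = (\<lambda>h. \<Sum>l\<in>UNIV. h$l *\<^sub>R pd l f v)"
    by blast
  then show ?thesis
    using assms frechet_derivative_works by metis
qed

lemma frechet_derivative_eq_sum_pd:
  fixes f :: "real^'k::finite \<Rightarrow> 'e::real_normed_vector"
  assumes "f differentiable (at v)"
  shows "frechet_derivative f (at v) h = (\<Sum>l\<in>UNIV. h$l *\<^sub>R pd l f v)"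
  by (simp add: frechet_derivative_at[OF has_derivative_sum_pd[OF assms], symmetric])

lemma pd_cong_open:
  assumes "open U" "u \<in> U" "\<And>v. v \<in> U \<Longrightarrow> f v = g v"
  shows "pd i f u = pd i g u"
proof -
  have "(f has_derivative f') (at u) = (g has_derivative f') (at u)" for f'
    using has_derivative_transform_within_open[of f f' u UNIV U g]
      has_derivative_transform_within_open[of g f' u UNIV U f] assms by auto
  then show ?thesis unfolding pd_def frechet_derivative_def by simp
qed

lemma differentiable_cong_open:
  assumes "open U" "u \<in> U" "\<And>v. v \<in> U \<Longrightarrow> f v = g v" "f differentiable (at u)"
  shows "g differentiable (at u)"
  using assms has_derivative_transform_within_open unfolding differentiable_def by metis

lemma pd_const: "pd i (\<lambda>v::real^'k::finite. c :: 'e::real_normed_vector) v = 0"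
  using has_derivative_imp_pd[of "\<lambda>v. c" "\<lambda>h. 0" v i] by simp

lemma pd_add:
  assumes "f differentiable (at v)" "g differentiable (at v)"
  shows "pd i (\<lambda>v. f v + g v) v = pd i f v + pd i g v"
  using has_derivative_imp_pd[OF has_derivative_add[OF assms[unfolded frechet_derivative_works]]]
  by (simp add: pd_def)

lemma pd_Pair:
  assumes "f differentiable (at v)" "g differentiable (at v)"
  shows "pd i (\<lambda>v. (f v, g v)) v = (pd i f v, pd i g v)"
  using has_derivative_imp_pd[OF has_derivative_Pair[OF assms[unfolded frechet_derivative_works]]]
  by (simp add: pd_def)

lemma pd_scaleR_right:
  assumes "f differentiable (at v)"
  shows "pd i (\<lambda>v. c *\<^sub>R f v) v = c *\<^sub>R pd i f v"
  using has_derivative_imp_pd[OF has_derivative_scaleR_right[OF assms[unfolded frechet_derivative_works]]]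
  by (simp add: pd_def)

lemma pd_sum:
  fixes F :: "'l \<Rightarrow> real^'k::finite \<Rightarrow> 'e::real_normed_vector"
  assumes "finite S" "\<And>l. l \<in> S \<Longrightarrow> F l differentiable (at v)"
  shows "pd i (\<lambda>v. \<Sum>l\<in>S. F l v) v = (\<Sum>l\<in>S. pd i (F l) v)"
proof -
  have "((\<lambda>v. \<Sum>l\<in>S. F l v) has_derivative (\<lambda>h. \<Sum>l\<in>S. frechet_derivative (F l) (at v) h)) (at v)"
    using assms by (intro has_derivative_sum) (auto simp: frechet_derivative_works)
  from has_derivative_imp_pd[OF this] show ?thesis by (simp add: pd_def)
qed

lemma bounded_bilinear_differentiable:
  assumes "bounded_bilinear B" "f differentiable (at v)" "g differentiable (at v)"
  shows "(\<lambda>v. B (f v) (g v)) differentiable (at v)"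
  using bounded_bilinear.FDERIV[OF assms(1)] assms(2,3) unfolding differentiable_def by blast

lemma pd_bounded_bilinear:
  assumes "bounded_bilinear B" "f differentiable (at v)" "g differentiable (at v)"
  shows "pd i (\<lambda>v. B (f v) (g v)) v = B (pd i f v) (g v) + B (f v) (pd i g v)"
  using has_derivative_imp_pd[OF bounded_bilinear.FDERIV[OF assms(1) assms(2,3)[unfolded frechet_derivative_works]]]
  by (simp add: pd_def add.commute)

lemmas pd_inner = pd_bounded_bilinear[OF bounded_bilinear_inner]
lemmas pd_mult = pd_bounded_bilinear[OF bounded_bilinear_mult]

lemma smooth_on_pd: "smooth_on U f \<Longrightarrow> smooth_on U (pd i f)"
  unfolding smooth_on_def by (metis Ck_on.simps(2))

lemma smooth_on_imp_differentiable:
  assumes "open U" "smooth_on U f" "v \<in> U"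
  shows "f differentiable (at v)"
proof -
  have "Ck_on (Suc 0) U f" using assms(2) unfolding smooth_on_def by blast
  then show ?thesis using assms(1,3) differentiable_on_eq_differentiable_at by auto
qed

lemma Ck_on_Suc_imp_Ck_on: "Ck_on (Suc k) U f \<Longrightarrow> Ck_on k U f"
proof (induction k arbitrary: f)
  case 0
  then show ?case by (simp add: differentiable_imp_continuous_on)
next
  case (Suc k)
  then show ?case by (metis Ck_on.simps(2))
qed

lemma Ck_on_cong:
  assumes "open U" "\<And>v. v \<in> U \<Longrightarrow> f v = g v" "Ck_on k U f"
  shows "Ck_on k U g"
  using assms(2,3)
proof (induction k arbitrary: f g)
  case 0
  then show ?case using continuous_on_cong by force
next
  case (Suc k)
  have "g differentiable_on U"
    using Suc.prems differentiable_cong_open[OF assms(1) _ Suc.prems(1)]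
    by (auto simp: differentiable_on_eq_differentiable_at[OF assms(1)])
  moreover have "Ck_on k U (pd i g)" for i
    using Suc.IH[of "pd i f" "pd i g"] Suc.prems pd_cong_open[OF assms(1), of _ f g] by auto
  ultimately show ?case by simp
qed

lemma Ck_on_add:
  assumes "open U" "Ck_on k U f" "Ck_on k U g"
  shows "Ck_on k U (\<lambda>v. f v + g v)"
  using assms(2,3)
proof (induction k arbitrary: f g)
  case 0
  then show ?case by (simp add: continuous_on_add)
next
  case (Suc k)
  then have d: "f differentiable (at v)" "g differentiable (at v)" if "v \<in> U" for v
    using that assms(1) by (auto simp: differentiable_on_eq_differentiable_at)
  have "Ck_on k U (\<lambda>v. pd i f v + pd i g v)" for i
    using Suc by simp
  then have "Ck_on k U (pd i (\<lambda>v. f v + g v))" for i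
    by (rule Ck_on_cong[OF assms(1), rotated]) (simp add: pd_add d)
  moreover have "(\<lambda>v. f v + g v) differentiable_on U"
    using Suc.prems by simp
  ultimately show ?case by simp
qed

lemma Ck_on_Pair:
  assumes "open U" "Ck_on k U f" "Ck_on k U g"
  shows "Ck_on k U (\<lambda>v. (f v, g v))"
  using assms(2,3)
proof (induction k arbitrary: f g)
  case 0
  then show ?case by (simp add: continuous_on_Pair)
next
  case (Suc k)
  then have d: "f differentiable (at v)" "g differentiable (at v)" if "v \<in> U" for v
    using that assms(1) by (auto simp: differentiable_on_eq_differentiable_at)
  have "Ck_on k U (\<lambda>v. (pd i f v, pd i g v))" for i
    using Suc by simp
  then have "Ck_on k U (pd i (\<lambda>v. (f v, g v)))" for i
    by (rule Ck_on_cong[OF assms(1), rotated]) (simp add: pd_Pair d)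
  moreover have "(\<lambda>v. (f v, g v)) differentiable_on U"
    using d assms(1) by (simp add: differentiable_on_eq_differentiable_at differentiable_Pair)
  ultimately show ?case by simp
qed

lemma Ck_on_bounded_bilinear:
  assumes B: "bounded_bilinear B" and U: "open U" and "Ck_on k U f" "Ck_on k U g"
  shows "Ck_on k U (\<lambda>v. B (f v) (g v))"
  using assms(3,4)
proof (induction k arbitrary: f g)
  case 0
  then show ?case by (simp add: bounded_bilinear.continuous_on[OF B])
next
  case (Suc k)
  then have d: "f differentiable (at v)" "g differentiable (at v)" if "v \<in> U" for v
    using that U by (auto simp: differentiable_on_eq_differentiable_at)
  have "Ck_on k U (\<lambda>v. B (pd i f v) (g v) + B (f v) (pd i g v))" for i
    using Suc by (intro Ck_on_add[OF U]) (simp_all add: Ck_on_Suc_imp_Ck_on)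
  then have "Ck_on k U (pd i (\<lambda>v. B (f v) (g v)))" for i
    by (rule Ck_on_cong[OF U, rotated]) (simp add: pd_bounded_bilinear[OF B] d)
  moreover have "(\<lambda>v. B (f v) (g v)) differentiable_on U"
    using d U by (simp add: differentiable_on_eq_differentiable_at bounded_bilinear_differentiable[OF B])
  ultimately show ?case by simp
qed

lemma smooth_on_Pair:
  "open U \<Longrightarrow> smooth_on U f \<Longrightarrow> smooth_on U g \<Longrightarrow> smooth_on U (\<lambda>v. (f v, g v))"
  unfolding smooth_on_def by (blast intro: Ck_on_Pair)

lemma smooth_on_bounded_bilinear:
  "bounded_bilinear B \<Longrightarrow> open U \<Longrightarrow> smooth_on U f \<Longrightarrow> smooth_on U g \<Longrightarrow> smooth_on U (\<lambda>v. B (f v) (g v))"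
  unfolding smooth_on_def by (blast intro: Ck_on_bounded_bilinear)

section \<open>Symmetry of second derivatives\<close>

lemma has_real_derivative_along_axis:
  fixes f :: "real^'k::finite \<Rightarrow> real"
  assumes "(f has_derivative (\<lambda>h. \<Sum>l\<in>UNIV. h$l * D l)) (at (c + s *\<^sub>R axis i 1))"
  shows "((\<lambda>s. f (c + s *\<^sub>R axis i 1)) has_real_derivative D i) (at s)"
proof -
  have "((\<lambda>s. c + s *\<^sub>R axis i 1) has_derivative (\<lambda>h. h *\<^sub>R axis i 1)) (at s)"
    by (auto intro!: derivative_eq_intros)
  from has_derivative_compose[OF this assms]
  have "((\<lambda>s. f (c + s *\<^sub>R axis i 1)) has_derivative (\<lambda>h. \<Sum>l\<in>UNIV. (h *\<^sub>R axis i 1)$l * D l)) (at s)" .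
  moreover have "(\<Sum>l\<in>UNIV. (h *\<^sub>R axis i 1)$l * D l) = D i * h" for h
  proof -
    have "(h *\<^sub>R axis i 1)$l * D l = (if l = i then D i * h else 0)" for l
      by (simp add: axis_def)
    then show ?thesis by simp
  qed
  ultimately show ?thesis by (simp add: has_field_derivative_def)
qed

lemma dist_add_axes_le:
  fixes u :: "real^'k::finite"
  shows "dist (u + \<sigma> *\<^sub>R axis a 1 + \<tau> *\<^sub>R axis b 1) u \<le> \<bar>\<sigma>\<bar> + \<bar>\<tau>\<bar>"
proof -
  have "dist (u + \<sigma> *\<^sub>R axis a 1 + \<tau> *\<^sub>R axis b 1) u = norm (\<sigma> *\<^sub>R axis a (1::real) + \<tau> *\<^sub>R axis b 1)"
    by (simp add: dist_norm)
  also have "\<dots> \<le> norm (\<sigma> *\<^sub>R axis a (1::real)) + norm (\<tau> *\<^sub>R axis b (1::real))"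
    by (rule norm_triangle_ineq)
  finally show ?thesis by simp
qed

text \<open>Two applications of the mean value theorem to the second difference over a square.\<close>
lemma second_difference_mean_value:
  fixes f :: "real^'k::finite \<Rightarrow> real"
  assumes df: "\<And>v. v \<in> U \<Longrightarrow> (f has_derivative (\<lambda>h. \<Sum>l\<in>UNIV. h$l * D1 l v)) (at v)"
    and dd: "\<And>v l. v \<in> U \<Longrightarrow> (D1 l has_derivative (\<lambda>h. \<Sum>m\<in>UNIV. h$m * D2 l m v)) (at v)"
    and t: "t > 0" and U: "ball u (3 * t) \<subseteq> U"
  shows "\<exists>w\<in>ball u (3 * t).
     f (u + t *\<^sub>R axis i 1 + t *\<^sub>R axis j 1) - f (u + t *\<^sub>R axis i 1) - f (u + t *\<^sub>R axis j 1) + f u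
      = t^2 * D2 i j w"
proof -
  have square: "u + \<sigma> *\<^sub>R axis i 1 + \<tau> *\<^sub>R axis j 1 \<in> ball u (3 * t)"
    if "0 \<le> \<sigma>" "\<sigma> \<le> t" "0 \<le> \<tau>" "\<tau> \<le> t" for \<sigma> \<tau>
    using dist_add_axes_le[of u \<sigma> i \<tau> j] that t by (simp add: dist_commute)
  define A where "A \<sigma> = f (u + t *\<^sub>R axis j 1 + \<sigma> *\<^sub>R axis i 1) - f (u + \<sigma> *\<^sub>R axis i 1)" for \<sigma>
  have "(A has_real_derivative (D1 i (u + t *\<^sub>R axis j 1 + \<sigma> *\<^sub>R axis i 1) - D1 i (u + \<sigma> *\<^sub>R axis i 1))) (at \<sigma>)"
    if "0 \<le> \<sigma>" "\<sigma> \<le> t" for \<sigma>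
  proof -
    have "u + t *\<^sub>R axis j 1 + \<sigma> *\<^sub>R axis i 1 \<in> U" "u + \<sigma> *\<^sub>R axis i 1 \<in> U"
      using square[of \<sigma> t] square[of \<sigma> 0] that t U by (auto simp: add_ac)
    then show ?thesis unfolding A_def
      by (intro DERIV_diff has_real_derivative_along_axis[where c = "u + t *\<^sub>R axis j 1"]
          has_real_derivative_along_axis[where c = u] df)
  qed
  from MVT2[OF t this] obtain \<sigma> where \<sigma>: "0 < \<sigma>" "\<sigma> < t"
    "A t - A 0 = t * (D1 i (u + t *\<^sub>R axis j 1 + \<sigma> *\<^sub>R axis i 1) - D1 i (u + \<sigma> *\<^sub>R axis i 1))"
    by auto
  define B where "B \<tau> = D1 i (u + \<sigma> *\<^sub>R axis i 1 + \<tau> *\<^sub>R axis j 1)" for \<tau>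
  have "(B has_real_derivative D2 i j (u + \<sigma> *\<^sub>R axis i 1 + \<tau> *\<^sub>R axis j 1)) (at \<tau>)"
    if "0 \<le> \<tau>" "\<tau> \<le> t" for \<tau>
    unfolding B_def
    using square[of \<sigma> \<tau>] that \<sigma> U
    by (intro has_real_derivative_along_axis[where c = "u + \<sigma> *\<^sub>R axis i 1" and f = "D1 i"] dd) auto
  from MVT2[OF t this] obtain \<tau> where \<tau>: "0 < \<tau>" "\<tau> < t"
    "B t - B 0 = t * D2 i j (u + \<sigma> *\<^sub>R axis i 1 + \<tau> *\<^sub>R axis j 1)"
    by auto
  have "f (u + t *\<^sub>R axis i 1 + t *\<^sub>R axis j 1) - f (u + t *\<^sub>R axis i 1) - f (u + t *\<^sub>R axis j 1) + f u
      = A t - A 0" unfolding A_def by (simp add: add_ac)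
  also have "\<dots> = t * (B t - B 0)" using \<sigma>(3) unfolding B_def by (simp add: add_ac)
  also have "\<dots> = t^2 * D2 i j (u + \<sigma> *\<^sub>R axis i 1 + \<tau> *\<^sub>R axis j 1)"
    using \<tau>(3) by (simp add: power2_eq_square)
  finally show ?thesis
    using square[of \<sigma> \<tau>] \<sigma> \<tau> by auto
qed

lemma mixed_partials_commute:
  fixes f :: "real^'k::finite \<Rightarrow> real"
  assumes U: "open U" "u \<in> U"
    and df: "\<And>v. v \<in> U \<Longrightarrow> (f has_derivative (\<lambda>h. \<Sum>l\<in>UNIV. h$l * D1 l v)) (at v)"
    and dd: "\<And>v l. v \<in> U \<Longrightarrow> (D1 l has_derivative (\<lambda>h. \<Sum>m\<in>UNIV. h$m * D2 l m v)) (at v)"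
    and c1: "continuous (at u) (D2 i j)" and c2: "continuous (at u) (D2 j i)"
  shows "D2 i j u = D2 j i u"
proof (rule ccontr)
  assume "D2 i j u \<noteq> D2 j i u"
  then have e: "\<bar>D2 i j u - D2 j i u\<bar> / 2 > 0" by simp
  obtain d1 where d1: "d1 > 0" "\<And>w. dist w u < d1 \<Longrightarrow> dist (D2 i j w) (D2 i j u) < \<bar>D2 i j u - D2 j i u\<bar> / 2"
    using c1 e unfolding continuous_at_eps_delta by blast
  obtain d2 where d2: "d2 > 0" "\<And>w. dist w u < d2 \<Longrightarrow> dist (D2 j i w) (D2 j i u) < \<bar>D2 i j u - D2 j i u\<bar> / 2"
    using c2 e unfolding continuous_at_eps_delta by blast
  obtain d0 where d0: "d0 > 0" "ball u d0 \<subseteq> U"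
    using U open_contains_ball by blast
  define t where "t = min d0 (min d1 d2) / 3"
  have t: "t > 0" using d0 d1 d2 by (simp add: t_def)
  have ball: "ball u (3 * t) \<subseteq> U" using d0 by (auto simp: t_def)
  obtain w1 where w1: "w1 \<in> ball u (3 * t)"
    "f (u + t *\<^sub>R axis i 1 + t *\<^sub>R axis j 1) - f (u + t *\<^sub>R axis i 1) - f (u + t *\<^sub>R axis j 1) + f u
      = t^2 * D2 i j w1"
    using second_difference_mean_value[OF df dd t ball] by blast
  obtain w2 where w2: "w2 \<in> ball u (3 * t)"
    "f (u + t *\<^sub>R axis j 1 + t *\<^sub>R axis i 1) - f (u + t *\<^sub>R axis j 1) - f (u + t *\<^sub>R axis i 1) + f u
      = t^2 * D2 j i w2"
    using second_difference_mean_value[OF df dd t ball] by blast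
  have "u + t *\<^sub>R axis j 1 + t *\<^sub>R axis i 1 = u + t *\<^sub>R axis i 1 + t *\<^sub>R axis j 1"
    by (simp add: add_ac)
  then have "t^2 * D2 i j w1 = t^2 * D2 j i w2"
    using w1(2) w2(2) by (simp only:)
  then have "D2 i j w1 = D2 j i w2"
    using t by simp
  moreover have "dist w1 u < d1" "dist w2 u < d2"
    using w1(1) w2(1) by (auto simp: t_def dist_commute)
  ultimately show False
    using d1(2) d2(2) by (fastforce simp: dist_real_def abs_if split: if_splits)
qed

lemma smooth_on_pd_commute:
  fixes f :: "real^'k::finite \<Rightarrow> 'e::real_inner"
  assumes U: "open U" "u \<in> U" and f: "smooth_on U f"
  shows "pd j (pd i f) u = pd i (pd j f) u"
proof -
  have "pd j (pd i f) u \<bullet> e = pd i (pd j f) u \<bullet> e" for e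
  proof -
    define D1 where "D1 l v = pd l f v \<bullet> e" for l v
    define D2 where "D2 l m v = pd m (pd l f) v \<bullet> e" for l m v
    have df: "((\<lambda>v. f v \<bullet> e) has_derivative (\<lambda>h. \<Sum>l\<in>UNIV. h$l * D1 l v)) (at v)" if "v \<in> U" for v
      using has_derivative_inner_left[OF has_derivative_sum_pd[OF smooth_on_imp_differentiable[OF U(1) f that]]]
      by (simp add: D1_def inner_sum_left)
    have dd: "(D1 l has_derivative (\<lambda>h. \<Sum>m\<in>UNIV. h$m * D2 l m v)) (at v)" if "v \<in> U" for v l
      using has_derivative_inner_left[OF has_derivative_sum_pd[OF smooth_on_imp_differentiable[OF U(1) smooth_on_pd[OF f] that]]]
      unfolding D1_def D2_def by (simp add: inner_sum_left)
    have c: "continuous (at u) (D2 l m)" for l m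
      unfolding D2_def
      by (intro continuous_inner continuous_const differentiable_imp_continuous_within
          smooth_on_imp_differentiable[OF U(1) smooth_on_pd[OF smooth_on_pd[OF f]] U(2)])
    from mixed_partials_commute[OF U df dd c c] show ?thesis
      by (simp add: D2_def)
  qed
  then have "(pd j (pd i f) u - pd i (pd j f) u) \<bullet> e = 0" for e
    by (simp add: inner_diff_left)
  from this[of "pd j (pd i f) u - pd i (pd j f) u"] show ?thesis
    by simp
qed

section \<open>The Gauss equation for an immersion\<close>

lemma matrix_inv_right: "invertible A \<Longrightarrow> A ** matrix_inv A = mat 1"
  unfolding invertible_def matrix_inv_def by (rule someI_ex[THEN conjunct1])

lemma matrix_inv_left: "invertible A \<Longrightarrow> matrix_inv A ** A = mat 1"
  unfolding invertible_def matrix_inv_def by (rule someI_ex[THEN conjunct2])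

lemma matrix_inv_entry_cramer:
  fixes A :: "real^'n::finite^'n"
  assumes "invertible A"
  shows "matrix_inv A $ l $ s = det (\<chi> i j. if j = l then axis s 1 $ i else A$i$j) / det A"
proof -
  define x where "x = (\<chi> l. matrix_inv A $ l $ s)"
  have "(A *v x) $ i = (A ** matrix_inv A) $ i $ s" for i
    by (simp add: x_def matrix_vector_mult_def matrix_matrix_mult_def)
  then have "A *v x = axis s 1"
    using matrix_inv_right[OF assms] by (simp add: vec_eq_iff mat_def axis_def)
  moreover have "det A \<noteq> 0" using assms invertible_det_nz by blast
  ultimately have "x = (\<chi> k. det (\<chi> i j. if j = k then axis s 1 $ i else A$i$j) / det A)"
    using cramer by blast
  then show ?thesis by (simp add: x_def vec_eq_iff)
qed

lemma differentiable_prod: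
  fixes F :: "'l \<Rightarrow> 'a::real_normed_vector \<Rightarrow> real"
  assumes "finite S" "\<And>l. l \<in> S \<Longrightarrow> F l differentiable (at v)"
  shows "(\<lambda>v. \<Prod>l\<in>S. F l v) differentiable (at v)"
  using assms by (induction S rule: finite_induct) simp_all

lemma differentiable_det:
  fixes M :: "'a::real_normed_vector \<Rightarrow> real^'n::finite^'n"
  assumes "\<And>i j. (\<lambda>v. M v $ i $ j) differentiable (at u)"
  shows "(\<lambda>v. det (M v)) differentiable (at u)"
  unfolding det_def
  by (intro differentiable_sum differentiable_mult differentiable_prod assms ballI)
    (simp_all add: finite_permutations)

lemma differentiable_matrix_inv_entry:
  fixes M :: "'a::real_normed_vector \<Rightarrow> real^'n::finite^'n"
  assumes U: "open U" "u \<in> U" and inv: "\<And>v. v \<in> U \<Longrightarrow> invertible (M v)"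
    and d: "\<And>i j. (\<lambda>v. M v $ i $ j) differentiable (at u)"
  shows "(\<lambda>v. matrix_inv (M v) $ l $ s) differentiable (at u)"
proof (rule differentiable_cong_open[OF U])
  show "(\<lambda>v. det (\<chi> i j. if j = l then axis s 1 $ i else M v$i$j) / det (M v)) differentiable (at u)"
  proof (intro differentiable_divide differentiable_det)
    show "(\<lambda>v. (\<chi> i j. if j = l then axis s 1 $ i else M v $ i $ j) $ i $ j) differentiable (at u)" for i j
      using d by (cases "j = l") auto
    show "det (M u) \<noteq> 0" using inv U invertible_det_nz by blast
  qed (rule d)
qed (simp add: matrix_inv_entry_cramer inv)

lemma sum_swap3: "(\<Sum>x\<in>A. \<Sum>y\<in>B. \<Sum>z\<in>C. G x y z) = (\<Sum>y\<in>B. \<Sum>z\<in>C. \<Sum>x\<in>A. G x y z)"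
  by (subst sum.swap) (rule sum.cong[OF refl], rule sum.swap)

lemma linear_inner_sum4:
  assumes "linear N"
  shows "(\<Sum>i\<in>I. \<Sum>j\<in>J. \<Sum>k\<in>K. \<Sum>m\<in>M. a i * b j * c k * d m * (N (P j k) \<bullet> P m i))
    = N (\<Sum>j\<in>J. \<Sum>k\<in>K. (b j * c k) *\<^sub>R P j k) \<bullet> (\<Sum>m\<in>M. \<Sum>i\<in>I. (d m * a i) *\<^sub>R P m i)"
proof -
  have "(\<Sum>i\<in>I. \<Sum>j\<in>J. \<Sum>k\<in>K. \<Sum>m\<in>M. a i * b j * c k * d m * (N (P j k) \<bullet> P m i))
      = (\<Sum>i\<in>I. \<Sum>m\<in>M. \<Sum>j\<in>J. \<Sum>k\<in>K. a i * b j * c k * d m * (N (P j k) \<bullet> P m i))"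
    by (rule sum.cong[OF refl]) (rule sum_swap3[symmetric])
  also have "\<dots> = (\<Sum>m\<in>M. \<Sum>i\<in>I. \<Sum>j\<in>J. \<Sum>k\<in>K. a i * b j * c k * d m * (N (P j k) \<bullet> P m i))"
    by (rule sum.swap)
  also have "\<dots> = N (\<Sum>j\<in>J. \<Sum>k\<in>K. (b j * c k) *\<^sub>R P j k) \<bullet> (\<Sum>m\<in>M. \<Sum>i\<in>I. (d m * a i) *\<^sub>R P m i)"
    using assms
    by (simp add: linear_sum linear_scale inner_sum_left inner_sum_right sum_distrib_left mult_ac)
  finally show ?thesis .
qed

text \<open>Coordinates, with respect to the frame of partial derivatives of \<open>\<Phi>\<close>, of the
  tangential component of \<open>w\<close> at \<open>\<Phi> v\<close>; \<open>g\<close> is the Gram matrix of that frame.\<close>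
definition tangent_coord ::
  "(real^'k::finite \<Rightarrow> 'e::real_inner) \<Rightarrow> (real^'k \<Rightarrow> real^'k^'k) \<Rightarrow> real^'k \<Rightarrow> 'e \<Rightarrow> 'k \<Rightarrow> real" where
  "tangent_coord \<Phi> g v w l = (\<Sum>s\<in>UNIV. matrix_inv (g v) $ l $ s * (w \<bullet> pd s \<Phi> v))"

definition normal_part ::
  "(real^'k::finite \<Rightarrow> 'e::real_inner) \<Rightarrow> (real^'k \<Rightarrow> real^'k^'k) \<Rightarrow> real^'k \<Rightarrow> 'e \<Rightarrow> 'e" where
  "normal_part \<Phi> g v w = w - (\<Sum>l\<in>UNIV. tangent_coord \<Phi> g v w l *\<^sub>R pd l \<Phi> v)"

definition second_derivative ::
  "(real^'k::finite \<Rightarrow> 'e::real_normed_vector) \<Rightarrow> real^'k \<Rightarrow> real^'k \<Rightarrow> real^'k \<Rightarrow> 'e" where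
  "second_derivative \<Phi> u x y = (\<Sum>i\<in>UNIV. \<Sum>j\<in>UNIV. (x$i * y$j) *\<^sub>R pd j (pd i \<Phi>) u)"

locale immersion =
  fixes U :: "(real^'k::finite) set" and \<Phi> :: "real^'k \<Rightarrow> 'e::real_inner"
    and g :: "real^'k \<Rightarrow> real^'k^'k"
  assumes open_U: "open U"
    and smooth: "smooth_on U \<Phi>"
    and inj_derivative: "\<And>v. v \<in> U \<Longrightarrow> inj (frechet_derivative \<Phi> (at v))"
    and metric: "\<And>v. v \<in> U \<Longrightarrow> g v = (\<chi> i j. pd i \<Phi> v \<bullet> pd j \<Phi> v)"
begin

lemma differentiable: "v \<in> U \<Longrightarrow> \<Phi> differentiable (at v)"
  and differentiable_pd: "v \<in> U \<Longrightarrow> pd i \<Phi> differentiable (at v)"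
  and differentiable_pd2: "v \<in> U \<Longrightarrow> pd j (pd i \<Phi>) differentiable (at v)"
  by (intro smooth_on_imp_differentiable[OF open_U] smooth smooth_on_pd; assumption)+

lemma pd2_commute: "v \<in> U \<Longrightarrow> pd j (pd i \<Phi>) v = pd i (pd j \<Phi>) v"
  by (rule smooth_on_pd_commute[OF open_U _ smooth])

lemma pd3_commute:
  assumes "v \<in> U"
  shows "pd i (pd k (pd j \<Phi>)) v = pd j (pd k (pd i \<Phi>)) v"
proof -
  have "pd i (pd k (pd j \<Phi>)) v = pd i (pd j (pd k \<Phi>)) v"
    by (rule pd_cong_open[OF open_U assms]) (rule pd2_commute)
  also have "\<dots> = pd j (pd i (pd k \<Phi>)) v"
    by (rule smooth_on_pd_commute[OF open_U assms smooth_on_pd[OF smooth]])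
  also have "\<dots> = pd j (pd k (pd i \<Phi>)) v"
    by (rule pd_cong_open[OF open_U assms]) (rule pd2_commute)
  finally show ?thesis .
qed

lemma metric_commute: "v \<in> U \<Longrightarrow> g v $ i $ j = g v $ j $ i"
  by (simp add: metric inner_commute)

lemma pd_metric:
  assumes "v \<in> U"
  shows "pd k (\<lambda>w. g w $ i $ j) v = pd k (pd i \<Phi>) v \<bullet> pd j \<Phi> v + pd i \<Phi> v \<bullet> pd k (pd j \<Phi>) v"
proof -
  have "pd k (\<lambda>w. g w $ i $ j) v = pd k (\<lambda>w. pd i \<Phi> w \<bullet> pd j \<Phi> w) v"
    by (rule pd_cong_open[OF open_U assms]) (simp add: metric)
  then show ?thesis
    by (simp add: pd_inner differentiable_pd assms)
qed

lemma differentiable_metric: "u \<in> U \<Longrightarrow> (\<lambda>v. g v $ i $ j) differentiable (at u)"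
  by (rule differentiable_cong_open[OF open_U, of _ "\<lambda>v. pd i \<Phi> v \<bullet> pd j \<Phi> v"])
    (auto simp: metric intro: bounded_bilinear_differentiable[OF bounded_bilinear_inner] differentiable_pd)

lemma metric_invertible:
  assumes v: "v \<in> U"
  shows "invertible (g v)"
proof -
  have lin: "linear (frechet_derivative \<Phi> (at v))"
    using differentiable[OF v] frechet_derivative_works has_derivative_linear by blast
  have "c = 0" if "g v *v c = 0" for c
  proof -
    define w where "w = (\<Sum>i\<in>UNIV. c$i *\<^sub>R pd i \<Phi> v)"
    have "w \<bullet> w = c \<bullet> (g v *v c)"
      by (simp add: metric[OF v] w_def inner_vec_def matrix_vector_mult_def inner_sum_left
          inner_sum_right sum_distrib_left mult_ac inner_commute)
    then have "frechet_derivative \<Phi> (at v) c = 0"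
      using that by (simp add: w_def frechet_derivative_eq_sum_pd differentiable v)
    then show "c = 0"
      using inj_derivative[OF v] lin linear_injective_0 by blast
  qed
  then have "inj ((*v) (g v))"
    using linear_injective_0[of "(*v) (g v)"] by auto
  then have "det (matrix ((*v) (g v))) \<noteq> 0"
    using det_nz_iff_inj[OF matrix_vector_mul_linear] by blast
  then show ?thesis
    by (simp add: invertible_det_nz)
qed

lemma tangent_coord_lower:
  assumes v: "v \<in> U"
  shows "(\<Sum>l\<in>UNIV. tangent_coord \<Phi> g v w l * g v $ l $ m) = w \<bullet> pd m \<Phi> v"
proof -
  have "(\<Sum>l\<in>UNIV. tangent_coord \<Phi> g v w l * g v $ l $ m)
      = (\<Sum>s\<in>UNIV. (w \<bullet> pd s \<Phi> v) * (\<Sum>l\<in>UNIV. g v $ m $ l * matrix_inv (g v) $ l $ s))"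
    unfolding tangent_coord_def
    by (simp add: sum_distrib_right sum_distrib_left metric_commute[OF v, of _ m] mult_ac)
      (rule sum.swap)
  also have "\<dots> = (\<Sum>s\<in>UNIV. (w \<bullet> pd s \<Phi> v) * (g v ** matrix_inv (g v)) $ m $ s)"
    by (simp add: matrix_matrix_mult_def)
  also have "\<dots> = w \<bullet> pd m \<Phi> v"
    using matrix_inv_right[OF metric_invertible[OF v]] by (simp add: mat_def if_distrib cong: if_cong)
  finally show ?thesis .
qed

lemma christoffel_eq_tangent_coord:
  assumes v: "v \<in> U"
  shows "christoffel g v l i j = tangent_coord \<Phi> g v (pd j (pd i \<Phi>) v) l"
proof -
  have "pd i (\<lambda>w. g w $ j $ s) v + pd j (\<lambda>w. g w $ i $ s) v - pd s (\<lambda>w. g w $ i $ j) v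
      = 2 * (pd j (pd i \<Phi>) v \<bullet> pd s \<Phi> v)" for s
    using pd2_commute[OF v, of i j] pd2_commute[OF v, of i s] pd2_commute[OF v, of j s]
    by (simp add: pd_metric[OF v] inner_commute)
  then show ?thesis
    unfolding christoffel_def tangent_coord_def by (simp add: sum_distrib_left mult_ac)
qed

lemma differentiable_tangent_coord:
  assumes u: "u \<in> U"
  shows "(\<lambda>v. tangent_coord \<Phi> g v (pd k (pd j \<Phi>) v) l) differentiable (at u)"
  unfolding tangent_coord_def
  by (intro differentiable_sum ballI differentiable_mult
      differentiable_matrix_inv_entry[OF open_U u metric_invertible differentiable_metric]
      bounded_bilinear_differentiable[OF bounded_bilinear_inner] differentiable_pd differentiable_pd2 u)
    simp_all

lemma pd_tangent_coord_lower:
  assumes u: "u \<in> U"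
  shows "(\<Sum>l\<in>UNIV. pd i (\<lambda>v. tangent_coord \<Phi> g v (pd k (pd j \<Phi>) v) l) u * g u $ l $ m)
    = pd i (pd k (pd j \<Phi>)) u \<bullet> pd m \<Phi> u + pd k (pd j \<Phi>) u \<bullet> pd i (pd m \<Phi>) u
      - (\<Sum>l\<in>UNIV. tangent_coord \<Phi> g u (pd k (pd j \<Phi>) u) l
           * (pd i (pd l \<Phi>) u \<bullet> pd m \<Phi> u + pd l \<Phi> u \<bullet> pd i (pd m \<Phi>) u))"
proof -
  let ?C = "\<lambda>l v. tangent_coord \<Phi> g v (pd k (pd j \<Phi>) v) l"
  have "pd i (\<lambda>v. \<Sum>l\<in>UNIV. ?C l v * g v $ l $ m) u = pd i (\<lambda>v. pd k (pd j \<Phi>) v \<bullet> pd m \<Phi> v) u"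
    by (rule pd_cong_open[OF open_U u]) (rule tangent_coord_lower)
  also have "\<dots> = pd i (pd k (pd j \<Phi>)) u \<bullet> pd m \<Phi> u + pd k (pd j \<Phi>) u \<bullet> pd i (pd m \<Phi>) u"
    by (simp add: pd_inner differentiable_pd differentiable_pd2 u)
  finally have "pd i (\<lambda>v. \<Sum>l\<in>UNIV. ?C l v * g v $ l $ m) u
      = pd i (pd k (pd j \<Phi>)) u \<bullet> pd m \<Phi> u + pd k (pd j \<Phi>) u \<bullet> pd i (pd m \<Phi>) u" .
  moreover have "pd i (\<lambda>v. \<Sum>l\<in>UNIV. ?C l v * g v $ l $ m) u
      = (\<Sum>l\<in>UNIV. pd i (?C l) u * g u $ l $ m
          + ?C l u * (pd i (pd l \<Phi>) u \<bullet> pd m \<Phi> u + pd l \<Phi> u \<bullet> pd i (pd m \<Phi>) u))"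
    by (subst pd_sum)
      (auto intro!: differentiable_mult differentiable_tangent_coord differentiable_metric u
        simp: pd_mult differentiable_tangent_coord differentiable_metric u pd_metric)
  ultimately show ?thesis
    by (simp add: sum.distrib)
qed

theorem gauss_equation:
  assumes u: "u \<in> U"
  shows "(\<Sum>l\<in>UNIV. riemann g u l i j k * g u $ l $ m)
    = normal_part \<Phi> g u (pd k (pd j \<Phi>) u) \<bullet> pd i (pd m \<Phi>) u
      - normal_part \<Phi> g u (pd k (pd i \<Phi>) u) \<bullet> pd j (pd m \<Phi>) u"
proof -
  define C where "C v l a b = tangent_coord \<Phi> g v (pd b (pd a \<Phi>) v) l" for v l a b
  have christoffel: "christoffel g v l a b = C v l a b" if "v \<in> U" for v l a b
    unfolding C_def using that by (rule christoffel_eq_tangent_coord)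
  have riemann: "riemann g u l i j k = pd i (\<lambda>v. C v l j k) u - pd j (\<lambda>v. C v l i k) u
      + (\<Sum>s\<in>UNIV. C u s j k * C u l i s - C u s i k * C u l j s)" for l
  proof -
    have "pd a (\<lambda>v. christoffel g v l b c) u = pd a (\<lambda>v. C v l b c) u" for a b c
      by (rule pd_cong_open[OF open_U u]) (rule christoffel)
    then show ?thesis unfolding riemann_def by (simp add: christoffel[OF u])
  qed
  have quadratic: "(\<Sum>l\<in>UNIV. (\<Sum>s\<in>UNIV. C u s b c * C u l a s) * g u $ l $ m)
      = (\<Sum>s\<in>UNIV. C u s b c * (pd s (pd a \<Phi>) u \<bullet> pd m \<Phi> u))" for a b c
  proof -
    have "(\<Sum>l\<in>UNIV. (\<Sum>s\<in>UNIV. C u s b c * C u l a s) * g u $ l $ m)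
        = (\<Sum>s\<in>UNIV. C u s b c * (\<Sum>l\<in>UNIV. C u l a s * g u $ l $ m))"
      by (simp add: sum_distrib_right sum_distrib_left mult_ac) (subst sum.swap, simp add: mult_ac)
    then show ?thesis by (simp add: C_def tangent_coord_lower[OF u])
  qed
  have "(\<Sum>l\<in>UNIV. riemann g u l i j k * g u $ l $ m)
      = (\<Sum>l\<in>UNIV. pd i (\<lambda>v. C v l j k) u * g u $ l $ m) - (\<Sum>l\<in>UNIV. pd j (\<lambda>v. C v l i k) u * g u $ l $ m)
        + (\<Sum>l\<in>UNIV. (\<Sum>s\<in>UNIV. C u s j k * C u l i s) * g u $ l $ m)
        - (\<Sum>l\<in>UNIV. (\<Sum>s\<in>UNIV. C u s i k * C u l j s) * g u $ l $ m)"
    unfolding riemann by (simp add: algebra_simps sum.distrib sum_subtractf sum_distrib_right)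
  also have "\<dots> = pd k (pd j \<Phi>) u \<bullet> pd i (pd m \<Phi>) u - (\<Sum>l\<in>UNIV. C u l j k * (pd l \<Phi> u \<bullet> pd i (pd m \<Phi>) u))
      - (pd k (pd i \<Phi>) u \<bullet> pd j (pd m \<Phi>) u - (\<Sum>l\<in>UNIV. C u l i k * (pd l \<Phi> u \<bullet> pd j (pd m \<Phi>) u)))"
    \<comment> \<open>third derivatives cancel by symmetry; the terms quadratic in \<open>C\<close> cancel against
      those coming from the derivative of \<open>g\<close>\<close>
    unfolding quadratic unfolding C_def pd_tangent_coord_lower[OF u]
    using pd3_commute[OF u, of i k j] pd2_commute[OF u]
    by (simp add: algebra_simps sum.distrib sum_subtractf)
  also have "\<dots> = normal_part \<Phi> g u (pd k (pd j \<Phi>) u) \<bullet> pd i (pd m \<Phi>) u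
      - normal_part \<Phi> g u (pd k (pd i \<Phi>) u) \<bullet> pd j (pd m \<Phi>) u"
    by (simp add: normal_part_def C_def inner_diff_left inner_sum_left)
  finally show ?thesis .
qed

lemma linear_normal_part: "linear (normal_part \<Phi> g u)"
proof (rule linearI)
  show "normal_part \<Phi> g u (x + y) = normal_part \<Phi> g u x + normal_part \<Phi> g u y" for x y
    by (simp add: normal_part_def tangent_coord_def inner_add_left distrib_left sum.distrib
        scaleR_add_left algebra_simps)
  show "normal_part \<Phi> g u (r *\<^sub>R x) = r *\<^sub>R normal_part \<Phi> g u x" for r x
    by (simp add: normal_part_def tangent_coord_def scaleR_sum_right scaleR_diff_right
        sum_distrib_left mult_ac)
qed

lemma gform_eq:
  assumes u: "u \<in> U"
  shows "gform g u x y = frechet_derivative \<Phi> (at u) x \<bullet> frechet_derivative \<Phi> (at u) y"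
  by (simp add: gform_def metric[OF u] frechet_derivative_eq_sum_pd differentiable u
      inner_sum_left inner_sum_right sum_distrib_left mult_ac) (rule sum.swap)

theorem sectional_curvature_eq:
  assumes u: "u \<in> U"
  shows "sectional_curvature g u a b =
    (normal_part \<Phi> g u (second_derivative \<Phi> u b b) \<bullet> second_derivative \<Phi> u a a
      - normal_part \<Phi> g u (second_derivative \<Phi> u a b) \<bullet> second_derivative \<Phi> u a b)
    / ((frechet_derivative \<Phi> (at u) a \<bullet> frechet_derivative \<Phi> (at u) a)
        * (frechet_derivative \<Phi> (at u) b \<bullet> frechet_derivative \<Phi> (at u) b)
      - (frechet_derivative \<Phi> (at u) a \<bullet> frechet_derivative \<Phi> (at u) b)\<^sup>2)"
proof -
  let ?N = "normal_part \<Phi> g u" and ?P = "\<lambda>i j. pd j (pd i \<Phi>) u"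
  have "(\<Sum>l\<in>UNIV. \<Sum>m\<in>UNIV. a$i * b$j * b$k * a$m * riemann g u l i j k * g u $ l $ m)
      = (\<Sum>m\<in>UNIV. a$i * b$j * b$k * a$m * (\<Sum>l\<in>UNIV. riemann g u l i j k * g u $ l $ m))" for i j k
    by (subst sum.swap) (simp add: sum_distrib_left mult_ac)
  then have "(\<Sum>i\<in>UNIV. \<Sum>j\<in>UNIV. \<Sum>k\<in>UNIV. \<Sum>l\<in>UNIV. \<Sum>m\<in>UNIV.
        a$i * b$j * b$k * a$m * riemann g u l i j k * g u $ l $ m)
      = (\<Sum>i\<in>UNIV. \<Sum>j\<in>UNIV. \<Sum>k\<in>UNIV. \<Sum>m\<in>UNIV. a$i * b$j * b$k * a$m * (?N (?P j k) \<bullet> ?P m i))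
      - (\<Sum>i\<in>UNIV. \<Sum>j\<in>UNIV. \<Sum>k\<in>UNIV. \<Sum>m\<in>UNIV. a$i * b$j * b$k * a$m * (?N (?P i k) \<bullet> ?P m j))"
    by (simp add: gauss_equation[OF u] right_diff_distrib sum_subtractf)
  also have "(\<Sum>i\<in>UNIV. \<Sum>j\<in>UNIV. \<Sum>k\<in>UNIV. \<Sum>m\<in>UNIV. a$i * b$j * b$k * a$m * (?N (?P j k) \<bullet> ?P m i))
      = ?N (second_derivative \<Phi> u b b) \<bullet> second_derivative \<Phi> u a a"
    unfolding second_derivative_def by (rule linear_inner_sum4[OF linear_normal_part])
  also have "(\<Sum>i\<in>UNIV. \<Sum>j\<in>UNIV. \<Sum>k\<in>UNIV. \<Sum>m\<in>UNIV. a$i * b$j * b$k * a$m * (?N (?P i k) \<bullet> ?P m j))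
      = (\<Sum>j\<in>UNIV. \<Sum>i\<in>UNIV. \<Sum>k\<in>UNIV. \<Sum>m\<in>UNIV. b$j * a$i * b$k * a$m * (?N (?P i k) \<bullet> ?P m j))"
    by (subst sum.swap) (simp add: mult_ac)
  also have "\<dots> = ?N (second_derivative \<Phi> u a b) \<bullet> second_derivative \<Phi> u a b"
    unfolding second_derivative_def by (rule linear_inner_sum4[OF linear_normal_part])
  finally show ?thesis
    by (simp add: sectional_curvature_def gform_eq[OF u])
qed

lemma normal_part_eqI:
  assumes u: "u \<in> U" and orth: "\<And>s. (w - frechet_derivative \<Phi> (at u) c) \<bullet> pd s \<Phi> u = 0"
  shows "normal_part \<Phi> g u w = w - frechet_derivative \<Phi> (at u) c"
proof -
  have D: "frechet_derivative \<Phi> (at u) c = (\<Sum>l\<in>UNIV. c$l *\<^sub>R pd l \<Phi> u)"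
    by (rule frechet_derivative_eq_sum_pd[OF differentiable[OF u]])
  have w: "w \<bullet> pd s \<Phi> u = (\<Sum>m\<in>UNIV. c$m * g u $ s $ m)" for s
    using orth[of s]
    by (simp add: D inner_diff_left inner_sum_left metric[OF u] inner_commute[of "pd s \<Phi> u"])
  have "tangent_coord \<Phi> g u w l = c$l" for l
  proof -
    have "tangent_coord \<Phi> g u w l = (\<Sum>s\<in>UNIV. \<Sum>m\<in>UNIV. matrix_inv (g u) $ l $ s * g u $ s $ m * c$m)"
      unfolding tangent_coord_def w by (simp add: sum_distrib_left mult_ac)
    also have "\<dots> = (\<Sum>m\<in>UNIV. c$m * (matrix_inv (g u) ** g u) $ l $ m)"
      by (subst sum.swap) (simp add: matrix_matrix_mult_def sum_distrib_left mult_ac)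
    also have "\<dots> = c$l"
      using matrix_inv_left[OF metric_invertible[OF u]] by (simp add: mat_def if_distrib cong: if_cong)
    finally show ?thesis .
  qed
  then show ?thesis
    by (simp add: normal_part_def D)
qed

end

section \<open>A quadratic embedding of the unit sphere\<close>

locale orthogonal_complex_structure =
  fixes J :: "real^'n::finite^'n"
  assumes J_J [simp]: "\<And>x. J *v (J *v x) = - x"
    and J_skew: "\<And>x y. (J *v x) \<bullet> y = - (x \<bullet> (J *v y))"
begin

lemma inner_J_self [simp]: "x \<bullet> (J *v x) = 0"
  using J_skew[of x x] by (simp add: inner_commute)

lemma inner_J_swap: "x \<bullet> (J *v y) = - (y \<bullet> (J *v x))"
  using J_skew[of y x] by (simp add: inner_commute)

end

lemma complex_structure_imp_orthogonal_complex_structure: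
  fixes J :: "real^'n::finite^'n"
  assumes "complex_structure J"
  shows "orthogonal_complex_structure J"
proof
  have J: "orthogonal_matrix J" "J ** J = - mat 1"
    using assms by (auto simp: complex_structure_def)
  show JJ: "J *v (J *v x) = - x" for x
  proof -
    have "(- mat 1 :: real^'n^'n) *v x = - (mat 1 *v x)"
      by (simp add: matrix_vector_mult_def vec_eq_iff sum_negf)
    then show ?thesis
      using J(2) by (simp add: matrix_vector_mul_assoc)
  qed
  have "orthogonal_transformation (\<lambda>x. J *v x)"
    using J(1) by (simp add: orthogonal_transformation_matrix)
  then have isometry: "(J *v x) \<bullet> (J *v y) = x \<bullet> y" for x y
    unfolding orthogonal_transformation_def by blast
  show "(J *v x) \<bullet> y = - (x \<bullet> (J *v y))" for x y
  proof -
    have "(J *v x) \<bullet> y = - ((J *v x) \<bullet> (J *v (J *v y)))"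
      by (simp add: JJ)
    then show ?thesis
      by (simp only: isometry)
  qed
qed

definition outer :: "real^'n \<Rightarrow> real^'n \<Rightarrow> real^'n^'n" where
  "outer x y = (\<chi> i j. x$i * y$j)"

text \<open>For a unit vector \<open>x\<close>, \<open>hopf_bilinear J x x / 2\<close> is the orthogonal projection onto
  the complex line through \<open>x\<close>.\<close>
definition hopf_bilinear :: "real^'n^'n \<Rightarrow> real^'n \<Rightarrow> real^'n \<Rightarrow> real^'n^'n" where
  "hopf_bilinear J x y = outer x y + outer y x + outer (J *v x) (J *v y) + outer (J *v y) (J *v x)"

definition hopf_embedding :: "real^'n^'n \<Rightarrow> real^'n \<Rightarrow> (real^'n) \<times> (real^'n^'n)" where
  "hopf_embedding J x = (x, (1/4) *\<^sub>R hopf_bilinear J x x)"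

definition hopf_embedding_deriv :: "real^'n^'n \<Rightarrow> real^'n \<Rightarrow> real^'n \<Rightarrow> (real^'n) \<times> (real^'n^'n)" where
  "hopf_embedding_deriv J p v = (v, (1/2) *\<^sub>R hopf_bilinear J p v)"

text \<open>Second derivative of \<open>hopf_embedding J\<close> along the sphere at \<open>p\<close>: the Euclidean Hessian
  corrected by the second fundamental form \<open>-(X \<bullet> Y) p\<close> of the sphere.\<close>
definition sphere_hessian :: "real^'n^'n \<Rightarrow> real^'n \<Rightarrow> real^'n \<Rightarrow> real^'n \<Rightarrow> (real^'n) \<times> (real^'n^'n)" where
  "sphere_hessian J p X Y = (0, (1/2) *\<^sub>R hopf_bilinear J X Y) - (X \<bullet> Y) *\<^sub>R hopf_embedding_deriv J p p"

text \<open>Pulled back by \<open>hopf_embedding_deriv J p\<close>, the tangential component of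
  \<open>sphere_hessian J p X Y\<close>; the normal component \<open>hopf_sff J p X Y\<close> is the second fundamental
  form of the embedded sphere.\<close>
definition hessian_tangent :: "real^'n^'n \<Rightarrow> real^'n \<Rightarrow> real^'n \<Rightarrow> real^'n \<Rightarrow> real^'n" where
  "hessian_tangent J p X Y = - (1/2) *\<^sub>R ((X \<bullet> (J *v p)) *\<^sub>R (J *v Y) + (Y \<bullet> (J *v p)) *\<^sub>R (J *v X))
     - ((X \<bullet> (J *v p)) * (Y \<bullet> (J *v p))) *\<^sub>R p"

definition hopf_sff :: "real^'n^'n \<Rightarrow> real^'n \<Rightarrow> real^'n \<Rightarrow> real^'n \<Rightarrow> (real^'n) \<times> (real^'n^'n)" where
  "hopf_sff J p X Y = sphere_hessian J p X Y - hopf_embedding_deriv J p (hessian_tangent J p X Y)"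

lemma bounded_bilinear_outer: "bounded_bilinear outer"
proof -
  have "bilinear outer"
    unfolding bilinear_def outer_def by (auto intro!: linearI simp: vec_eq_iff algebra_simps)
  then show ?thesis
    using bilinear_conv_bounded_bilinear by blast
qed

lemma bounded_bilinear_hopf_bilinear: "bounded_bilinear (hopf_bilinear J)"
proof -
  interpret outer: bounded_bilinear outer by (rule bounded_bilinear_outer)
  have "bilinear (hopf_bilinear J)"
    unfolding bilinear_def hopf_bilinear_def
    by (auto intro!: linearI simp: outer.add_left outer.add_right outer.scaleR_left outer.scaleR_right
        algebra_simps)
  then show ?thesis
    using bilinear_conv_bounded_bilinear by blast
qed

lemma hopf_bilinear_commute: "hopf_bilinear J x y = hopf_bilinear J y x"
  by (simp add: hopf_bilinear_def algebra_simps)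

lemma inner_outer: "outer a b \<bullet> outer c d = (a \<bullet> c) * (b \<bullet> d)"
  by (simp add: outer_def inner_vec_def sum_product mult_ac)

lemmas hopf_bilinear_simps =
  bounded_bilinear.add_left[OF bounded_bilinear_hopf_bilinear]
  bounded_bilinear.add_right[OF bounded_bilinear_hopf_bilinear]
  bounded_bilinear.diff_left[OF bounded_bilinear_hopf_bilinear]
  bounded_bilinear.diff_right[OF bounded_bilinear_hopf_bilinear]
  bounded_bilinear.minus_left[OF bounded_bilinear_hopf_bilinear]
  bounded_bilinear.minus_right[OF bounded_bilinear_hopf_bilinear]
  bounded_bilinear.scaleR_left[OF bounded_bilinear_hopf_bilinear]
  bounded_bilinear.scaleR_right[OF bounded_bilinear_hopf_bilinear]

lemma has_derivative_hopf_embedding: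
  "(hopf_embedding J has_derivative hopf_embedding_deriv J p) (at p)"
proof -
  have "((\<lambda>x. hopf_bilinear J x x) has_derivative (\<lambda>h. hopf_bilinear J p h + hopf_bilinear J h p)) (at p)"
    using bounded_bilinear.FDERIV[OF bounded_bilinear_hopf_bilinear has_derivative_ident has_derivative_ident] .
  then have "((\<lambda>x. (x, (1/4) *\<^sub>R hopf_bilinear J x x)) has_derivative
      (\<lambda>h. (h, (1/4) *\<^sub>R (hopf_bilinear J p h + hopf_bilinear J h p)))) (at p)"
    by (intro has_derivative_Pair has_derivative_ident has_derivative_scaleR_right)
  moreover have "(\<lambda>h. (h, (1/4) *\<^sub>R (hopf_bilinear J p h + hopf_bilinear J h p))) = hopf_embedding_deriv J p"
    by (simp add: fun_eq_iff hopf_embedding_deriv_def hopf_bilinear_commute[of J _ p] scaleR_add_right[symmetric])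
  ultimately show ?thesis
    unfolding hopf_embedding_def by simp
qed

lemma linear_hopf_embedding_deriv: "linear (hopf_embedding_deriv J p)"
  by (rule linearI) (simp_all add: hopf_embedding_deriv_def hopf_bilinear_simps scaleR_add_right)

lemmas hopf_embedding_deriv_simps =
  linear_add[OF linear_hopf_embedding_deriv] linear_diff[OF linear_hopf_embedding_deriv]
  linear_scale[OF linear_hopf_embedding_deriv] linear_sum[OF linear_hopf_embedding_deriv]

context orthogonal_complex_structure
begin

lemma inner_hopf_bilinear:
  "hopf_bilinear J a b \<bullet> hopf_bilinear J c d = 4 * ((a \<bullet> c) * (b \<bullet> d) + (a \<bullet> d) * (b \<bullet> c)
      + (a \<bullet> (J *v c)) * (b \<bullet> (J *v d)) + (a \<bullet> (J *v d)) * (b \<bullet> (J *v c)))"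
  using inner_J_swap[of c a] inner_J_swap[of d b] inner_J_swap[of c b] inner_J_swap[of d a]
  by (simp add: hopf_bilinear_def inner_add_left inner_add_right inner_outer J_skew inner_commute
      algebra_simps)

lemma inner_hopf_embedding_deriv:
  assumes "p \<bullet> p = 1" "v \<bullet> p = 0" "w \<bullet> p = 0"
  shows "hopf_embedding_deriv J p v \<bullet> hopf_embedding_deriv J p w = 2 * (v \<bullet> w) - (v \<bullet> (J *v p)) * (w \<bullet> (J *v p))"
  using assms inner_J_swap[of p w]
  by (simp add: hopf_embedding_deriv_def inner_hopf_bilinear inner_commute algebra_simps)

lemma inner_tproj_J:
  assumes "p \<bullet> p = 1" "X \<bullet> p = 0" "Y \<bullet> p = 0"
  shows "tproj p (J *v X) \<bullet> tproj p (J *v Y) = X \<bullet> Y - (X \<bullet> (J *v p)) * (Y \<bullet> (J *v p))"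
  using assms inner_J_swap[of p X] inner_J_swap[of p Y]
  by (simp add: tproj_def inner_diff_left inner_diff_right J_skew inner_commute algebra_simps)

lemma hessian_tangent_orthogonal:
  assumes "p \<bullet> p = 1" "X \<bullet> p = 0" "Y \<bullet> p = 0"
  shows "hessian_tangent J p X Y \<bullet> p = 0"
  using assms inner_J_swap[of p X] inner_J_swap[of p Y]
  by (simp add: hessian_tangent_def inner_diff_left inner_add_left J_skew inner_commute algebra_simps)

lemma hopf_sff_orthogonal:
  assumes p: "p \<bullet> p = 1" and "X \<bullet> p = 0" "Y \<bullet> p = 0" "v \<bullet> p = 0"
  shows "hopf_sff J p X Y \<bullet> hopf_embedding_deriv J p v = 0"
proof -
  have "p \<bullet> X = 0" "p \<bullet> Y = 0" "p \<bullet> v = 0"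
    using assms by (simp_all add: inner_commute)
  moreover have "p \<bullet> (J *v X) = - (X \<bullet> (J *v p))" "p \<bullet> (J *v Y) = - (Y \<bullet> (J *v p))"
    "Y \<bullet> (J *v X) = - (X \<bullet> (J *v Y))" "X \<bullet> (J *v v) = - (v \<bullet> (J *v X))"
    "Y \<bullet> (J *v v) = - (v \<bullet> (J *v Y))" "p \<bullet> (J *v v) = - (v \<bullet> (J *v p))"
    by (rule inner_J_swap)+
  moreover have "X \<bullet> v = v \<bullet> X" "Y \<bullet> v = v \<bullet> Y" "Y \<bullet> X = X \<bullet> Y"
    by (simp_all add: inner_commute)
  ultimately show ?thesis
    using assms
    unfolding hopf_sff_def sphere_hessian_def hessian_tangent_def hopf_embedding_deriv_def
    by (simp add: hopf_bilinear_simps inner_diff_left inner_diff_right inner_add_left inner_add_right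
        inner_hopf_bilinear J_skew) (simp add: field_simps)
qed

lemma inner_hopf_sff_sphere_hessian:
  assumes pp: "p \<bullet> p = 1" and Ap: "A \<bullet> p = 0" and Bp: "B \<bullet> p = 0"
    and Cp: "C \<bullet> p = 0" and Dp: "D \<bullet> p = 0"
  shows "hopf_sff J p A B \<bullet> sphere_hessian J p C D
     = 3 * (A \<bullet> B) * (C \<bullet> D)
       + ((A \<bullet> C) * (B \<bullet> D) + (A \<bullet> D) * (B \<bullet> C)
         + (A \<bullet> (J *v C)) * (B \<bullet> (J *v D)) + (A \<bullet> (J *v D)) * (B \<bullet> (J *v C)))
       - 2 * (C \<bullet> D) * (A \<bullet> (J *v p)) * (B \<bullet> (J *v p))
       - 2 * (A \<bullet> B) * (C \<bullet> (J *v p)) * (D \<bullet> (J *v p))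
       - 1/2 * ((A \<bullet> (J *v p)) * (C \<bullet> (J *v p)) * (B \<bullet> D) + (B \<bullet> (J *v p)) * (C \<bullet> (J *v p)) * (A \<bullet> D)
              + (A \<bullet> (J *v p)) * (D \<bullet> (J *v p)) * (B \<bullet> C) + (B \<bullet> (J *v p)) * (D \<bullet> (J *v p)) * (A \<bullet> C))
       + 2 * (A \<bullet> (J *v p)) * (B \<bullet> (J *v p)) * (C \<bullet> (J *v p)) * (D \<bullet> (J *v p))"
proof -
  have "p \<bullet> A = 0" "p \<bullet> B = 0" "p \<bullet> C = 0" "p \<bullet> D = 0"
    using Ap Bp Cp Dp by (simp_all add: inner_commute)
  moreover have "B \<bullet> A = A \<bullet> B" "C \<bullet> A = A \<bullet> C" "D \<bullet> A = A \<bullet> D" "C \<bullet> B = B \<bullet> C"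
    "D \<bullet> B = B \<bullet> D" "D \<bullet> C = C \<bullet> D"
    by (simp_all add: inner_commute)
  moreover have "p \<bullet> (J *v A) = - (A \<bullet> (J *v p))" "p \<bullet> (J *v B) = - (B \<bullet> (J *v p))"
    "p \<bullet> (J *v C) = - (C \<bullet> (J *v p))" "p \<bullet> (J *v D) = - (D \<bullet> (J *v p))"
    "B \<bullet> (J *v A) = - (A \<bullet> (J *v B))" "C \<bullet> (J *v A) = - (A \<bullet> (J *v C))"
    "D \<bullet> (J *v A) = - (A \<bullet> (J *v D))" "C \<bullet> (J *v B) = - (B \<bullet> (J *v C))"
    "D \<bullet> (J *v B) = - (B \<bullet> (J *v D))" "D \<bullet> (J *v C) = - (C \<bullet> (J *v D))"
    by (rule inner_J_swap)+
  ultimately show ?thesis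
    using assms
    unfolding hopf_sff_def sphere_hessian_def hessian_tangent_def hopf_embedding_deriv_def
    by (simp add: hopf_bilinear_simps inner_diff_left inner_diff_right inner_add_left inner_add_right
        inner_hopf_bilinear J_skew) (simp add: field_simps)
qed

lemma hopf_curvature_numerator:
  assumes p: "p \<bullet> p = 1" and Xp: "X \<bullet> p = 0" and Yp: "Y \<bullet> p = 0"
    and XX: "X \<bullet> X = 1" and YY: "Y \<bullet> Y = 1" and XY: "X \<bullet> Y = 0"
  shows "hopf_sff J p Y Y \<bullet> sphere_hessian J p X X - hopf_sff J p X Y \<bullet> sphere_hessian J p X Y
    = 2 * (1 - 3/4 * ((hopf J p \<bullet> X)\<^sup>2 + (hopf J p \<bullet> Y)\<^sup>2) + 3/2 * (A_hopf J p X \<bullet> Y)\<^sup>2)"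
proof -
  have "Y \<bullet> X = 0"
    using XY by (simp add: inner_commute)
  moreover have "Y \<bullet> (J *v X) = - (X \<bullet> (J *v Y))"
    by (rule inner_J_swap)
  moreover have "hopf J p \<bullet> X = X \<bullet> (J *v p)" "hopf J p \<bullet> Y = Y \<bullet> (J *v p)"
    by (simp_all add: hopf_def inner_commute)
  moreover have "A_hopf J p X \<bullet> Y = X \<bullet> (J *v Y)"
  proof -
    have "p \<bullet> Y = 0" using Yp by (simp add: inner_commute)
    then show ?thesis by (simp add: A_hopf_def tproj_def inner_diff_left J_skew)
  qed
  ultimately show ?thesis
    using assms
    by (simp add: inner_hopf_sff_sphere_hessian algebra_simps power2_eq_square)
qed

lemma hopf_curvature_denominator:
  assumes p: "p \<bullet> p = 1" and Xp: "X \<bullet> p = 0" and Yp: "Y \<bullet> p = 0"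
    and XX: "X \<bullet> X = 1" and YY: "Y \<bullet> Y = 1" and XY: "X \<bullet> Y = 0"
  shows "(hopf_embedding_deriv J p X \<bullet> hopf_embedding_deriv J p X) * (hopf_embedding_deriv J p Y \<bullet> hopf_embedding_deriv J p Y)
      - (hopf_embedding_deriv J p X \<bullet> hopf_embedding_deriv J p Y)\<^sup>2
    = 2 * (2 - ((hopf J p \<bullet> X)\<^sup>2 + (hopf J p \<bullet> Y)\<^sup>2))"
  using assms inner_J_swap[of p X] inner_J_swap[of p Y]
  by (simp add: inner_hopf_embedding_deriv hopf_def J_skew algebra_simps power2_eq_square)

end

section \<open>The sectional curvature of the Hopf vector field\<close>

lemma surj_onto_hyperplane:
  fixes L :: "real^'b::finite \<Rightarrow> real^'a::finite"
  assumes L: "linear L" "inj L" and card: "CARD('a) = CARD('b) + 1" and p: "p \<noteq> 0"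
    and range: "\<And>c. L c \<bullet> p = 0" and z: "z \<bullet> p = 0"
  shows "\<exists>c. L c = z"
proof -
  have S: "subspace (range L)" using L by (simp add: linear_subspace_image)
  have T: "subspace {x. p \<bullet> x = 0}" by (rule subspace_hyperplane)
  have ST: "range L \<subseteq> {x. p \<bullet> x = 0}" using range by (auto simp: inner_commute)
  have "dim (range L) = CARD('b)"
    using dim_image_eq[OF L(1), of UNIV] L(2) by (simp add: inj_on_def)
  moreover have "dim {x. p \<bullet> x = 0} = CARD('b)"
    using dim_hyperplane[OF p] card by simp
  ultimately have "range L = {x. p \<bullet> x = 0}"
    using subspace_dim_equal[OF S T ST] by simp
  then have "z \<in> range L" using z by (simp add: inner_commute)
  then show ?thesis by auto
qed

locale hopf_chart = orthogonal_complex_structure J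
  for J :: "real^'a::finite^'a" +
  fixes \<phi> :: "real^'b::finite \<Rightarrow> real^'a" and U :: "(real^'b) set" and u :: "real^'b"
  assumes card: "CARD('a) = CARD('b) + 1"
    and open_U: "open U" and u: "u \<in> U"
    and smooth: "smooth_on U \<phi>"
    and unit: "\<forall>v\<in>U. norm (\<phi> v) = 1"
    and inj_derivative: "\<forall>v\<in>U. inj (frechet_derivative \<phi> (at v))"
begin

abbreviation "p \<equiv> \<phi> u"
abbreviation "D \<equiv> frechet_derivative \<phi> (at u)"

lemma differentiable_phi: "v \<in> U \<Longrightarrow> \<phi> differentiable (at v)"
  and differentiable_pd_phi: "v \<in> U \<Longrightarrow> pd i \<phi> differentiable (at v)"
  by (intro smooth_on_imp_differentiable[OF open_U] smooth smooth_on_pd; assumption)+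

lemma phi_inner_self: "v \<in> U \<Longrightarrow> \<phi> v \<bullet> \<phi> v = 1"
  using unit by (simp add: power2_norm_eq_inner[symmetric])

lemma pd_phi_orthogonal:
  assumes v: "v \<in> U"
  shows "pd i \<phi> v \<bullet> \<phi> v = 0"
proof -
  have "pd i \<phi> v \<bullet> \<phi> v + \<phi> v \<bullet> pd i \<phi> v = pd i (\<lambda>w. \<phi> w \<bullet> \<phi> w) v"
    by (simp add: pd_inner differentiable_phi v)
  also have "\<dots> = pd i (\<lambda>w. 1::real) v"
    by (rule pd_cong_open[OF open_U v]) (simp add: phi_inner_self)
  finally show ?thesis
    by (simp add: pd_const inner_commute)
qed

lemma pd2_phi_orthogonal: "pd j (pd i \<phi>) u \<bullet> p = - (pd i \<phi> u \<bullet> pd j \<phi> u)"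
proof -
  have "pd j (pd i \<phi>) u \<bullet> p + pd i \<phi> u \<bullet> pd j \<phi> u = pd j (\<lambda>w. pd i \<phi> w \<bullet> \<phi> w) u"
    by (simp add: pd_inner differentiable_phi differentiable_pd_phi u)
  also have "\<dots> = pd j (\<lambda>w. 0::real) u"
    by (rule pd_cong_open[OF open_U u]) (simp add: pd_phi_orthogonal)
  finally show ?thesis
    by (simp add: pd_const eq_neg_iff_add_eq_0)
qed

lemma derivative_eq_sum: "D x = (\<Sum>i\<in>UNIV. x$i *\<^sub>R pd i \<phi> u)"
  by (rule frechet_derivative_eq_sum_pd[OF differentiable_phi[OF u]])

lemma derivative_orthogonal: "D x \<bullet> p = 0"
  by (simp add: derivative_eq_sum inner_sum_left pd_phi_orthogonal u)

lemma second_derivative_orthogonal: "second_derivative \<phi> u x y \<bullet> p = - (D x \<bullet> D y)"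
  by (simp add: second_derivative_def derivative_eq_sum inner_sum_left inner_sum_right
      pd2_phi_orthogonal sum_distrib_left sum_negf mult_ac) (rule sum.swap)

lemma derivative_onto:
  assumes "z \<bullet> p = 0"
  shows "\<exists>c. D c = z"
proof (rule surj_onto_hyperplane[OF _ _ card _ derivative_orthogonal assms])
  show "linear D"
    using differentiable_phi[OF u] frechet_derivative_works has_derivative_linear by blast
  show "inj D" using inj_derivative u by blast
  show "p \<noteq> 0" using phi_inner_self[OF u] by auto
qed

lemma has_derivative_embedding:
  "v \<in> U \<Longrightarrow> ((\<lambda>v. hopf_embedding J (\<phi> v)) has_derivative
      (\<lambda>h. hopf_embedding_deriv J (\<phi> v) (frechet_derivative \<phi> (at v) h))) (at v)"
  using has_derivative_compose[OF differentiable_phi[unfolded frechet_derivative_works] has_derivative_hopf_embedding] .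

lemma frechet_derivative_embedding:
  "v \<in> U \<Longrightarrow> frechet_derivative (\<lambda>v. hopf_embedding J (\<phi> v)) (at v) h
    = hopf_embedding_deriv J (\<phi> v) (frechet_derivative \<phi> (at v) h)"
  using frechet_derivative_at[OF has_derivative_embedding] by metis

lemma pd_embedding:
  "v \<in> U \<Longrightarrow> pd i (\<lambda>v. hopf_embedding J (\<phi> v)) v = hopf_embedding_deriv J (\<phi> v) (pd i \<phi> v)"
  using has_derivative_imp_pd[OF has_derivative_embedding] by (simp add: pd_def)

lemma pd2_embedding:
  "pd j (pd i (\<lambda>v. hopf_embedding J (\<phi> v))) u
    = hopf_embedding_deriv J p (pd j (pd i \<phi>) u) + (0, (1/2) *\<^sub>R hopf_bilinear J (pd i \<phi> u) (pd j \<phi> u))"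
proof -
  have "pd j (pd i (\<lambda>v. hopf_embedding J (\<phi> v))) u
      = pd j (\<lambda>v. (pd i \<phi> v, (1/2) *\<^sub>R hopf_bilinear J (\<phi> v) (pd i \<phi> v))) u"
    by (rule pd_cong_open[OF open_U u]) (simp add: pd_embedding hopf_embedding_deriv_def)
  also have "\<dots> = (pd j (pd i \<phi>) u,
      (1/2) *\<^sub>R (hopf_bilinear J (pd j \<phi> u) (pd i \<phi> u) + hopf_bilinear J p (pd j (pd i \<phi>) u)))"
  proof -
    have "(\<lambda>v. hopf_bilinear J (\<phi> v) (pd i \<phi> v)) differentiable (at u)"
      by (rule bounded_bilinear_differentiable[OF bounded_bilinear_hopf_bilinear
            differentiable_phi[OF u] differentiable_pd_phi[OF u]])
    then show ?thesis
      by (simp add: pd_Pair differentiable_pd_phi[OF u] pd_scaleR_right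
          pd_bounded_bilinear[OF bounded_bilinear_hopf_bilinear] differentiable_phi u)
  qed
  finally show ?thesis
    by (simp add: hopf_embedding_deriv_def scaleR_add_right hopf_bilinear_commute[of J "pd j \<phi> u"])
qed

lemma smooth_embedding: "smooth_on U (\<lambda>v. hopf_embedding J (\<phi> v))"
proof -
  have "smooth_on U (\<lambda>v. hopf_bilinear J ((1/4) *\<^sub>R \<phi> v) (\<phi> v))"
    by (rule smooth_on_bounded_bilinear[OF bounded_bilinear.comp1[OF bounded_bilinear_hopf_bilinear
          bounded_linear_scaleR_right] open_U smooth smooth])
  then show ?thesis
    unfolding hopf_embedding_def
    by (intro smooth_on_Pair[OF open_U smooth]) (simp add: hopf_bilinear_simps)
qed

lemma metric_matrix_eq:
  assumes v: "v \<in> U"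
  shows "metric_matrix \<phi> (\<lambda>v. hopf J (\<phi> v)) v
    = (\<chi> i j. pd i (\<lambda>v. hopf_embedding J (\<phi> v)) v \<bullet> pd j (\<lambda>v. hopf_embedding J (\<phi> v)) v)"
proof -
  have "((\<lambda>v. hopf J (\<phi> v)) has_derivative (\<lambda>h. J *v frechet_derivative \<phi> (at v) h)) (at v)"
    unfolding hopf_def
    by (rule bounded_linear.has_derivative[OF matrix_vector_mul_bounded_linear
          differentiable_phi[OF v, unfolded frechet_derivative_works]])
  then have "pd i (\<lambda>v. hopf J (\<phi> v)) v = J *v pd i \<phi> v" for i
    by (simp add: has_derivative_imp_pd) (simp add: pd_def)
  then have "sasaki_pullback \<phi> (\<lambda>v. hopf J (\<phi> v)) v (axis i 1) (axis j 1)
      = pd i (\<lambda>v. hopf_embedding J (\<phi> v)) v \<bullet> pd j (\<lambda>v. hopf_embedding J (\<phi> v)) v" for i j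
    unfolding sasaki_pullback_def pd_def[symmetric]
    using inner_tproj_J[OF phi_inner_self[OF v] pd_phi_orthogonal[OF v] pd_phi_orthogonal[OF v]]
      inner_hopf_embedding_deriv[OF phi_inner_self[OF v] pd_phi_orthogonal[OF v] pd_phi_orthogonal[OF v]]
    by (simp add: pd_embedding v)
  then show ?thesis
    by (simp add: metric_matrix_def)
qed

sublocale embedding: immersion U "\<lambda>v. hopf_embedding J (\<phi> v)" "metric_matrix \<phi> (\<lambda>v. hopf J (\<phi> v))"
proof
  show "inj (frechet_derivative (\<lambda>v. hopf_embedding J (\<phi> v)) (at v))" if "v \<in> U" for v
    using inj_derivative that
    by (auto simp: inj_def frechet_derivative_embedding hopf_embedding_deriv_def)
qed (simp_all add: open_U smooth_embedding metric_matrix_eq)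

lemma second_derivative_embedding:
  "second_derivative (\<lambda>v. hopf_embedding J (\<phi> v)) u x y
    = sphere_hessian J p (D x) (D y) + hopf_embedding_deriv J p (second_derivative \<phi> u x y + (D x \<bullet> D y) *\<^sub>R p)"
proof -
  interpret hb: bounded_bilinear "hopf_bilinear J" by (rule bounded_bilinear_hopf_bilinear)
  have "(\<Sum>i\<in>UNIV. \<Sum>j\<in>UNIV. (x$i * y$j) *\<^sub>R (0, (1/2) *\<^sub>R hopf_bilinear J (pd i \<phi> u) (pd j \<phi> u)))
      = (0, (1/2) *\<^sub>R hopf_bilinear J (D x) (D y))"
    by (simp add: prod_eq_iff fst_sum snd_sum derivative_eq_sum hb.sum_left hb.sum_right
        hb.scaleR_left hb.scaleR_right scaleR_sum_right) (subst sum.swap, simp add: mult.commute)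
  then have "second_derivative (\<lambda>v. hopf_embedding J (\<phi> v)) u x y
      = hopf_embedding_deriv J p (second_derivative \<phi> u x y) + (0, (1/2) *\<^sub>R hopf_bilinear J (D x) (D y))"
    by (simp add: second_derivative_def pd2_embedding hopf_embedding_deriv_simps scaleR_add_right sum.distrib)
  then show ?thesis
    by (simp add: sphere_hessian_def hopf_embedding_deriv_simps algebra_simps)
qed

lemma normal_part_second_derivative:
  "normal_part (\<lambda>v. hopf_embedding J (\<phi> v)) (metric_matrix \<phi> (\<lambda>v. hopf J (\<phi> v))) u
      (second_derivative (\<lambda>v. hopf_embedding J (\<phi> v)) u x y)
    = hopf_sff J p (D x) (D y)"
proof -
  let ?z = "second_derivative \<phi> u x y + (D x \<bullet> D y) *\<^sub>R p + hessian_tangent J p (D x) (D y)"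
  have "?z \<bullet> p = 0"
    using second_derivative_orthogonal phi_inner_self[OF u]
      hessian_tangent_orthogonal[OF phi_inner_self[OF u] derivative_orthogonal derivative_orthogonal]
    by (simp add: inner_add_left)
  then obtain c where c: "D c = ?z"
    using derivative_onto by blast
  have sff: "second_derivative (\<lambda>v. hopf_embedding J (\<phi> v)) u x y
      - frechet_derivative (\<lambda>v. hopf_embedding J (\<phi> v)) (at u) c = hopf_sff J p (D x) (D y)"
    by (simp add: second_derivative_embedding frechet_derivative_embedding[OF u] c hopf_sff_def
        hopf_embedding_deriv_simps)
  show ?thesis
    unfolding sff[symmetric]
    by (rule embedding.normal_part_eqI[OF u])
      (simp add: sff pd_embedding[OF u] hopf_sff_orthogonal phi_inner_self[OF u] derivative_orthogonal
        pd_phi_orthogonal[OF u])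
qed

lemma normal_part_inner_second_derivative:
  "normal_part (\<lambda>v. hopf_embedding J (\<phi> v)) (metric_matrix \<phi> (\<lambda>v. hopf J (\<phi> v))) u
      (second_derivative (\<lambda>v. hopf_embedding J (\<phi> v)) u x y)
    \<bullet> second_derivative (\<lambda>v. hopf_embedding J (\<phi> v)) u x' y'
    = hopf_sff J p (D x) (D y) \<bullet> sphere_hessian J p (D x') (D y')"
proof -
  have "(second_derivative \<phi> u x' y' + (D x' \<bullet> D y') *\<^sub>R p) \<bullet> p = 0"
    using second_derivative_orthogonal phi_inner_self[OF u] by (simp add: inner_add_left)
  then show ?thesis
    unfolding normal_part_second_derivative second_derivative_embedding[of x' y'] inner_add_right
    by (simp add: hopf_sff_orthogonal phi_inner_self[OF u] derivative_orthogonal)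
qed

end

theorem proposition3:
  fixes J :: "real^'a^'a"
    and \<phi> :: "real^'b \<Rightarrow> real^'a"
    and U :: "(real^'b) set"
    and u a b :: "real^'b"
  assumes "complex_structure J"
    and "CARD('a) = CARD('b) + 1"
    and "open U" and "u \<in> U"
    and "smooth_on U \<phi>"
    and "\<forall>v\<in>U. norm (\<phi> v) = 1"
    and "\<forall>v\<in>U. inj (frechet_derivative \<phi> (at v))"
    and "norm (frechet_derivative \<phi> (at u) a) = 1"
    and "norm (frechet_derivative \<phi> (at u) b) = 1"
    and "frechet_derivative \<phi> (at u) a \<bullet> frechet_derivative \<phi> (at u) b = 0"
  shows "(let p = \<phi> u; X = frechet_derivative \<phi> (at u) a; Y = frechet_derivative \<phi> (at u) b;
              \<xi> = hopf J p;
              s = (\<xi> \<bullet> X)\<^sup>2 + (\<xi> \<bullet> Y)\<^sup>2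
          in sectional_curvature (metric_matrix \<phi> (\<lambda>v. hopf J (\<phi> v))) u a b
             = (1 - 3/4 * s + 3/2 * (A_hopf J p X \<bullet> Y)\<^sup>2) / (2 - s))"
proof -
  interpret hopf_chart J \<phi> U u
    using assms complex_structure_imp_orthogonal_complex_structure[OF assms(1)]
    by (simp add: hopf_chart_def hopf_chart_axioms_def)
  have X: "D a \<bullet> D a = 1" and Y: "D b \<bullet> D b = 1" and XY: "D a \<bullet> D b = 0"
    using assms(8-10) by (simp_all add: power2_norm_eq_inner[symmetric])
  note hopf_facts = phi_inner_self[OF u] derivative_orthogonal derivative_orthogonal X Y XY
  show ?thesis
    unfolding Let_def embedding.sectional_curvature_eq[OF u] normal_part_inner_second_derivative
      frechet_derivative_embedding[OF u] hopf_curvature_numerator[OF hopf_facts]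
      hopf_curvature_denominator[OF hopf_facts]
    by (rule mult_divide_mult_cancel_left) simp
qed

end
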